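(* Let $\mathcal{X}$ be a finite set, $\mathcal{Z}$ a measurable space with a measure $\mu$, and $V:\mathcal{X}\to\mathcal{Z}$ a channel such that for each $x\in\mathcal{X}$ the probability measure $V(\cdot\mid x)$ has density $\omega(z\mid x)$ with respect to $\mu$. Let $\{f_s:\mathcal{X}\to\{0,1\}^k,\ s\in\mathcal{S}\}$ be a $b$-balanced $k$-bit UHF with finite seed set $\mathcal{S}$. Let $M$ be uniformly distributed on $\mathcal{M}=\{0,1\}^k$, let $S$ be uniformly distributed on $\mathcal{S}$ and independent of $M$, and given $M=m$, $S=s$, let $X$ be uniformly distributed on $f_s^{-1}(m)$; let $Z$ be the output of $V$ with input $X$ (so that, given $X$, $Z$ is conditionally independent of $(M,S)$ with law $V(\cdot\mid X)$). Then for every $\epsilon\in[0,1)$, \[ I(M\wedge Z,S)\le \frac{1}{\ln 2}\cdot 2^{-(b-I_{\max}^{\epsilon}(V))}+\epsilon k, \] where mutual information is measured in bits.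
   Context: A family $\{f_s: s\in\mathcal{S}\}$ of maps $f_s:\mathcal{X}\to\{0,1\}^k$ is a ($k$-bit) 2-universal hash family (UHF) if for all $x\neq x'$ in $\mathcal{X}$, $\frac{1}{|\mathcal{S}|}|\{s\in\mathcal{S}: f_s(x)=f_s(x')\}|\le 2^{-k}$. It is $b$-balanced if for every $s\in\mathcal{S}$ and every $m\in\{0,1\}^k$, $|\{x\in\mathcal{X}: f_s(x)=m\}|=2^b$. For a (possibly subnormalized) channel $V$ with densities $\omega(z\mid x)$ w.r.t. $\mu$, its max-information is $I_{\max}(V)=\log_2\int_{\mathcal{Z}}\max_{x\in\mathcal{X}}\omega(z\mid x)\,\mu(dz)$. For $\mathcal{T}\subseteq\mathcal{X}\times\mathcal{Z}$, $V_{\mathcal{T}}$ is the subnormalized channel with density $\omega_{\mathcal{T}}(z\mid x)=\omega(z\mid x)$ if $(x,z)\in\mathcal{T}$ and $0$ otherwise. The $\epsilon$-smooth max-information $I_{\max}^{\epsilon}(V)$ is the infimum of $I_{\max}(V_{\mathcal{T}})$ over all (measurable) $\mathcal{T}\subseteq\mathcal{X}\times\mathcal{Z}$ such that $V(\{z:(x,z)\in\mathcal{T}\}\mid x)\ge 1-\epsilon$ for all $x\in\mathcal{X}$. *)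

theory Defs
  imports "HOL-Probability.Probability"
begin

definition bitstrings :: "nat \<Rightarrow> bool list set" where
  "bitstrings k = {m. length m = k}"

definition is_UHF :: "'x set \<Rightarrow> 's set \<Rightarrow> nat \<Rightarrow> ('s \<Rightarrow> 'x \<Rightarrow> bool list) \<Rightarrow> bool" where
  "is_UHF X S k f \<longleftrightarrow>
     (\<forall>s\<in>S. \<forall>x\<in>X. f s x \<in> bitstrings k) \<and>
     (\<forall>x\<in>X. \<forall>x'\<in>X. x \<noteq> x' \<longrightarrow>
        real (card {s\<in>S. f s x = f s x'}) / real (card S) \<le> 2 powr (- real k))"

definition balanced :: "'x set \<Rightarrow> 's set \<Rightarrow> nat \<Rightarrow> nat \<Rightarrow> ('s \<Rightarrow> 'x \<Rightarrow> bool list) \<Rightarrow> bool" where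
  "balanced X S k b f \<longleftrightarrow>
     (\<forall>s\<in>S. \<forall>m\<in>bitstrings k. card {x\<in>X. f s x = m} = 2 ^ b)"

definition log2e :: "ennreal \<Rightarrow> ereal" where
  "log2e a = (if a = \<infinity> then \<infinity> else if a = 0 then -\<infinity> else ereal (log 2 (enn2real a)))"

definition Imax :: "'z measure \<Rightarrow> 'x set \<Rightarrow> ('x \<Rightarrow> 'z \<Rightarrow> real) \<Rightarrow> ereal" where
  "Imax \<mu> X \<omega> = log2e (\<integral>\<^sup>+ z. Max ((\<lambda>x. ennreal (\<omega> x z)) ` X) \<partial>\<mu>)"

definition restrict_density :: "('x \<times> 'z) set \<Rightarrow> ('x \<Rightarrow> 'z \<Rightarrow> real) \<Rightarrow> 'x \<Rightarrow> 'z \<Rightarrow> real" where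
  "restrict_density T \<omega> x z = (if (x, z) \<in> T then \<omega> x z else 0)"

definition Imax_smooth :: "real \<Rightarrow> 'z measure \<Rightarrow> 'x set \<Rightarrow> ('x \<Rightarrow> 'z \<Rightarrow> real) \<Rightarrow> ereal" where
  "Imax_smooth \<epsilon> \<mu> X \<omega> =
     (INF T \<in> {T. T \<in> sets (count_space X \<Otimes>\<^sub>M \<mu>) \<and>
                  (\<forall>x\<in>X. emeasure (density \<mu> (\<lambda>z. ennreal (\<omega> x z))) {z \<in> space \<mu>. (x, z) \<in> T}
                          \<ge> ennreal (1 - \<epsilon>))}.
        Imax \<mu> X (restrict_density T \<omega>))"

definition pow2e :: "ereal \<Rightarrow> ereal" where
  "pow2e a = (case a of ereal r \<Rightarrow> ereal (2 powr r) | PInfty \<Rightarrow> \<infinity> | MInfty \<Rightarrow> 0)"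

definition MSX_pmf :: "'x set \<Rightarrow> 's set \<Rightarrow> nat \<Rightarrow> ('s \<Rightarrow> 'x \<Rightarrow> bool list)
                        \<Rightarrow> (bool list \<times> 's \<times> 'x) pmf" where
  "MSX_pmf X S k f =
     bind_pmf (pmf_of_set (bitstrings k)) (\<lambda>m.
     bind_pmf (pmf_of_set S) (\<lambda>s.
     bind_pmf (pmf_of_set {x\<in>X. f s x = m}) (\<lambda>x.
     return_pmf (m, s, x))))"

definition joint_MSXZ :: "'x set \<Rightarrow> 's set \<Rightarrow> nat \<Rightarrow> ('s \<Rightarrow> 'x \<Rightarrow> bool list)
       \<Rightarrow> 'z measure \<Rightarrow> ('x \<Rightarrow> 'z \<Rightarrow> real) \<Rightarrow> ((bool list \<times> 's \<times> 'x) \<times> 'z) measure" where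
  "joint_MSXZ X S k f \<mu> \<omega> =
     measure_pmf (MSX_pmf X S k f) \<bind>
       (\<lambda>(m, s, x). distr (density \<mu> (\<lambda>z. ennreal (\<omega> x z)))
                          (count_space UNIV \<Otimes>\<^sub>M \<mu>) (\<lambda>z. ((m, s, x), z)))"

end

theory Submission
  imports Defs
begin

text \<open>The mutual information \<open>I(M \<and> Z,S)\<close> is the expectation of \<open>log 2 g\<close>, where
  \<open>g(m,z,s) = 2^k \<Sum>{\<omega>(z|x) | f_s(x) = m} / \<Sum>{\<omega>(z|x) | x \<in> X}\<close> is the density of the law of
  \<open>(M,(Z,S))\<close> with respect to the product of its marginals; note that \<open>g \<le> 2^k\<close>. Fix a set \<open>T\<close>
  admissible in the definition of the smooth max-information. Where \<open>(X,Z) \<in> T\<close> we use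
  \<open>log 2 g \<le> (g - 1) / ln 2\<close>, elsewhere \<open>log 2 g \<le> k\<close>, and \<open>(X,Z) \<notin> T\<close> has probability at most \<open>\<epsilon>\<close>.
  Averaging over the seed, the collision bound of the universal hash family gives
  \<open>E[1_T g] \<le> P(T) + 2^-b \<integral> max_x \<omega>_T(z|x) d\<mu>\<close>, and the integral is \<open>2^Imax(V_T)\<close>.
  Hence \<open>I(M \<and> Z,S) \<le> 2^(Imax(V_T) - b) / ln 2 + \<epsilon> k\<close>; it remains to take the infimum over \<open>T\<close>.\<close>

lemma bitstrings_eq_lists: "bitstrings k = {xs. set xs \<subseteq> UNIV \<and> length xs = k}"
  by (auto simp: bitstrings_def)

lemma card_bitstrings: "card (bitstrings k) = 2 ^ k"
  using card_lists_length_eq[of "UNIV :: bool set" k] by (simp add: bitstrings_eq_lists)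

lemma finite_bitstrings: "finite (bitstrings k)"
  using finite_lists_length_eq[of "UNIV :: bool set" k] by (simp add: bitstrings_eq_lists)

lemma bitstrings_nonempty: "bitstrings k \<noteq> {}"
  using card_bitstrings[of k] by auto

lemma bind_measure_pmf_cong:
  assumes "\<And>t. t \<in> set_pmf p \<Longrightarrow> K t = K' t"
    and "\<And>t. sets (K t) = sets N" and "\<And>t. sets (K' t) = sets N"
  shows "measure_pmf p \<bind> K = measure_pmf p \<bind> K'"
proof -
  have "emeasure (measure_pmf p) (K -` A \<inter> space (measure_pmf p)) =
        emeasure (measure_pmf p) (K' -` A \<inter> space (measure_pmf p))" for A
  proof -
    have "K -` A \<inter> space (measure_pmf p) \<inter> set_pmf p = K' -` A \<inter> space (measure_pmf p) \<inter> set_pmf p"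
      using assms(1) by auto
    then show ?thesis
      by (metis emeasure_Int_set_pmf)
  qed
  then have "distr (measure_pmf p) (subprob_algebra N) K = distr (measure_pmf p) (subprob_algebra N) K'"
    unfolding distr_def by simp
  then show ?thesis
    by (simp add: bind_nonempty subprob_algebra_cong[OF assms(2)] subprob_algebra_cong[OF assms(3)])
qed

lemma sets_pair_count_space_UNIV:
  assumes "countable A" and T: "T \<in> sets (count_space A \<Otimes>\<^sub>M M)"
  shows "T \<in> sets (count_space UNIV \<Otimes>\<^sub>M M)"
proof -
  have "T \<subseteq> A \<times> space M"
    using sets.sets_into_space[OF T] by (simp add: space_pair_measure)
  then have "T = (\<Union>x\<in>A. {x} \<times> (Pair x -` T \<inter> space M))"
    by auto
  also have "\<dots> \<in> sets (count_space UNIV \<Otimes>\<^sub>M M)"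
    using assms by (intro sets.countable_UN'' pair_measureI) (auto intro: sets_Pair1[OF T])
  finally show ?thesis .
qed

lemma restrict_density_eq_indicator: "restrict_density T \<omega> x z = \<omega> x z * indicator T (x, z)"
  by (simp add: restrict_density_def indicator_def)

lemma log2_le_convex_bound:
  fixes g t :: real
  assumes "0 < g" "g \<le> 2 ^ k" "0 \<le> t" "t \<le> 1"
  shows "log 2 g \<le> t * ((g - 1) / ln 2) + (1 - t) * k"
proof -
  have ln_bound: "log 2 g \<le> (g - 1) / ln 2"
    using ln_le_minus_one[OF \<open>0 < g\<close>] by (simp add: log_def divide_right_mono)
  have "log 2 g \<le> log 2 (2 ^ k)"
    using assms(1,2) by (subst log_le_cancel_iff) auto
  then have k_bound: "log 2 g \<le> k"
    by (simp add: log_nat_power)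
  have "t * log 2 g + (1 - t) * log 2 g \<le> t * ((g - 1) / ln 2) + (1 - t) * k"
    using assms(3,4) by (intro add_mono mult_left_mono ln_bound k_bound) auto
  then show ?thesis
    by (simp add: algebra_simps)
qed

lemma pow2e_ereal_log: "0 < q \<Longrightarrow> pow2e (ereal (log 2 q)) = ereal q"
  by (simp add: pow2e_def)

lemma pow2e_mono: "a \<le> b \<Longrightarrow> pow2e a \<le> pow2e b"
  by (cases a; cases b) (auto simp: pow2e_def)

lemma pow2e_nonneg: "0 \<le> pow2e a"
  by (cases a) (auto simp: pow2e_def)

lemma pow2e_minus_diff: "pow2e (- (ereal r - a)) = ereal (2 powr - r) * pow2e a"
  by (cases a) (auto simp: pow2e_def powr_add[symmetric])

lemma le_pow2e_INF_log2e:
  fixes L :: "'a \<Rightarrow> ennreal" and y a c :: real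
  assumes "0 < a" and L_nonzero: "\<And>T. T \<in> A \<Longrightarrow> L T \<noteq> 0"
    and bound: "\<And>T. T \<in> A \<Longrightarrow> L T \<noteq> \<infinity> \<Longrightarrow> y \<le> a * enn2real (L T) + c"
  shows "ereal y \<le> ereal a * pow2e (INF T\<in>A. log2e (L T)) + ereal c"
proof (cases "y \<le> c")
  case True
  have "0 \<le> ereal a * pow2e (INF T\<in>A. log2e (L T))"
    using \<open>0 < a\<close> pow2e_nonneg by simp
  with True show ?thesis
    by (metis add_mono add_0 ereal_less_eq(3))
next
  case False
  define q where "q = (y - c) / a"
  have "0 < q"
    using False \<open>0 < a\<close> by (simp add: q_def)
  have "ereal (log 2 q) \<le> log2e (L T)" if "T \<in> A" for T
  proof (cases "L T = \<infinity>")
    case False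
    then have "q \<le> enn2real (L T)"
      using bound[OF that] \<open>0 < a\<close> by (simp add: q_def divide_le_eq mult.commute)
    then show ?thesis
      using False L_nonzero[OF that] \<open>0 < q\<close> by (simp add: log2e_def)
  qed (simp add: log2e_def)
  then have "pow2e (ereal (log 2 q)) \<le> pow2e (INF T\<in>A. log2e (L T))"
    by (intro pow2e_mono INF_greatest)
  then have "ereal a * ereal q \<le> ereal a * pow2e (INF T\<in>A. log2e (L T))"
    using \<open>0 < a\<close> \<open>0 < q\<close> by (intro ereal_mult_left_mono) (auto simp: pow2e_ereal_log)
  moreover have "a * q = y - c"
    using \<open>0 < a\<close> by (simp add: q_def)
  ultimately have "ereal (y - c) \<le> ereal a * pow2e (INF T\<in>A. log2e (L T))"
    by simp
  then show ?thesis
    by (cases "ereal a * pow2e (INF T\<in>A. log2e (L T))") auto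
qed

section \<open>Collisions of universal hash families\<close>

lemma UHF_collision_card:
  assumes "is_UHF X S k f" "finite S" "x \<in> X" "x' \<in> X" "x' \<noteq> x"
  shows "real (card {s\<in>S. f s x' = f s x}) \<le> real (card S) / 2 ^ k"
proof (cases "S = {}")
  case False
  have "real (card {s\<in>S. f s x' = f s x}) / real (card S) \<le> 2 powr (- real k)"
    using assms unfolding is_UHF_def by blast
  moreover have "real (card S) > 0"
    using \<open>finite S\<close> False by (simp add: card_gt_0_iff)
  ultimately show ?thesis
    by (simp add: powr_minus powr_realpow divide_le_eq field_simps)
qed simp

lemma UHF_fibre_sum_le:
  fixes w :: "'x \<Rightarrow> real"
  assumes uhf: "is_UHF X S k f" and "finite X" "finite S" "x \<in> X"
    and w_nonneg: "\<And>x. x \<in> X \<Longrightarrow> 0 \<le> w x"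
  shows "(\<Sum>s\<in>S. \<Sum>x'\<in>X. if f s x' = f s x then w x' else 0)
           \<le> card S * w x + card S / 2 ^ k * (\<Sum>x'\<in>X. w x')"
proof -
  have "(\<Sum>s\<in>S. \<Sum>x'\<in>X. if f s x' = f s x then w x' else 0)
        = (\<Sum>x'\<in>X. real (card {s\<in>S. f s x' = f s x}) * w x')"
    by (subst sum.swap) (simp add: sum.inter_filter[symmetric] \<open>finite S\<close>)
  also have "\<dots> = card S * w x + (\<Sum>x'\<in>X - {x}. real (card {s\<in>S. f s x' = f s x}) * w x')"
    using assms(2,4) by (simp add: sum.remove)
  also have "(\<Sum>x'\<in>X - {x}. real (card {s\<in>S. f s x' = f s x}) * w x')
             \<le> (\<Sum>x'\<in>X - {x}. card S / 2 ^ k * w x')"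
    using assms by (intro sum_mono mult_right_mono UHF_collision_card) auto
  also have "\<dots> \<le> (\<Sum>x'\<in>X. card S / 2 ^ k * w x')"
    using assms by (intro sum_mono2) auto
  finally show ?thesis
    by (simp add: sum_distrib_left)
qed

lemma UHF_normalized_fibre_sum_le:
  fixes w a :: "'x \<Rightarrow> real" and c :: real
  assumes uhf: "is_UHF X S k f" and "finite X" "finite S"
    and w_nonneg: "\<And>x. x \<in> X \<Longrightarrow> 0 \<le> w x"
    and a: "\<And>x. x \<in> X \<Longrightarrow> 0 \<le> a x" "\<And>x. x \<in> X \<Longrightarrow> a x \<le> w x" "\<And>x. x \<in> X \<Longrightarrow> a x \<le> c"
    and "0 \<le> c"
  shows "(\<Sum>s\<in>S. \<Sum>x\<in>X. a x * (2 ^ k * (\<Sum>x'\<in>X. if f s x' = f s x then w x' else 0) / (\<Sum>x'\<in>X. w x')))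
           \<le> card S * (\<Sum>x\<in>X. a x) + 2 ^ k * card S * c"
    (is "?lhs \<le> _")
proof -
  define \<sigma> where "\<sigma> = (\<Sum>x'\<in>X. w x')"
  show ?thesis
  proof (cases "\<sigma> = 0")
    case True
    then have "\<forall>x\<in>X. a x = 0"
      using a w_nonneg \<open>finite X\<close> by (metis \<sigma>_def sum_nonneg_eq_0_iff order_antisym)
    then show ?thesis
      using \<open>0 \<le> c\<close> by simp
  next
    case False
    then have "0 < \<sigma>"
      using w_nonneg by (simp add: \<sigma>_def order_less_le sum_nonneg)
    have "?lhs = (\<Sum>x\<in>X. a x * (2 ^ k / \<sigma>) * (\<Sum>s\<in>S. \<Sum>x'\<in>X. if f s x' = f s x then w x' else 0))"
      by (subst sum.swap) (simp add: \<sigma>_def sum_distrib_left mult_ac sum_divide_distrib)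
    also have "\<dots> \<le> (\<Sum>x\<in>X. a x * (2 ^ k / \<sigma>) * (card S * w x + card S / 2 ^ k * \<sigma>))"
      using assms \<open>0 < \<sigma>\<close> unfolding \<sigma>_def by (intro sum_mono mult_left_mono UHF_fibre_sum_le) auto
    also have "\<dots> = (\<Sum>x\<in>X. card S * a x + 2 ^ k * card S / \<sigma> * (a x * w x))"
      using \<open>0 < \<sigma>\<close> by (intro sum.cong refl) (simp add: field_simps)
    also have "\<dots> = card S * (\<Sum>x\<in>X. a x) + 2 ^ k * card S / \<sigma> * (\<Sum>x\<in>X. a x * w x)"
      by (simp add: sum.distrib sum_distrib_left)
    also have "\<dots> \<le> card S * (\<Sum>x\<in>X. a x) + 2 ^ k * card S / \<sigma> * (c * \<sigma>)"
    proof -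
      have "(\<Sum>x\<in>X. a x * w x) \<le> (\<Sum>x\<in>X. c * w x)"
        using a w_nonneg by (intro sum_mono mult_right_mono) auto
      then show ?thesis
        using \<open>0 < \<sigma>\<close> by (intro add_left_mono mult_left_mono) (auto simp: \<sigma>_def sum_distrib_left)
    qed
    also have "\<dots> = card S * (\<Sum>x\<in>X. a x) + 2 ^ k * card S * c"
      using \<open>0 < \<sigma>\<close> by simp
    finally show ?thesis
      by (simp add: \<sigma>_def)
  qed
qed

section \<open>The joint law of message, seed, input and output\<close>

locale hashed_channel =
  fixes X :: "'x set" and S :: "'s set" and k b :: nat
    and f :: "'s \<Rightarrow> 'x \<Rightarrow> bool list"
    and \<mu> :: "'z measure" and \<omega> :: "'x \<Rightarrow> 'z \<Rightarrow> real"
  assumes finite_X: "finite X"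
    and finite_S: "finite S" and S_nonempty: "S \<noteq> {}"
    and uhf: "is_UHF X S k f" and balanced: "balanced X S k b f"
    and \<omega>_measurable: "\<And>x. x \<in> X \<Longrightarrow> \<omega> x \<in> borel_measurable \<mu>"
    and \<omega>_nonneg: "\<And>x z. x \<in> X \<Longrightarrow> z \<in> space \<mu> \<Longrightarrow> 0 \<le> \<omega> x z"
    and \<omega>_prob: "\<And>x. x \<in> X \<Longrightarrow> (\<integral>\<^sup>+ z. ennreal (\<omega> x z) \<partial>\<mu>) = 1"
begin

lemma hash_in_bitstrings: "s \<in> S \<Longrightarrow> x \<in> X \<Longrightarrow> f s x \<in> bitstrings k"
  using uhf by (auto simp: is_UHF_def)

lemma card_fibre: "s \<in> S \<Longrightarrow> m \<in> bitstrings k \<Longrightarrow> card {x\<in>X. f s x = m} = 2 ^ b"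
  using balanced by (auto simp: balanced_def)

lemma fibre_nonempty: "s \<in> S \<Longrightarrow> m \<in> bitstrings k \<Longrightarrow> {x\<in>X. f s x = m} \<noteq> {}"
  using card_fibre by (metis card.empty power_not_zero zero_neq_numeral)

lemma sum_over_fibres:
  "s \<in> S \<Longrightarrow> (\<Sum>m\<in>bitstrings k. \<Sum>x\<in>{x\<in>X. f s x = m}. h x) = (\<Sum>x\<in>X. h x)"
  by (rule sum.group) (auto simp: finite_X finite_bitstrings hash_in_bitstrings)

lemma card_X: "card X = 2 ^ (k + b)"
proof -
  obtain s where s: "s \<in> S"
    using S_nonempty by auto
  have "card X = (\<Sum>m\<in>bitstrings k. \<Sum>x\<in>{x\<in>X. f s x = m}. 1::nat)"
    using sum_over_fibres[OF s, of "\<lambda>_. 1::nat"] by simp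
  also have "\<dots> = 2 ^ k * 2 ^ b"
    by (simp add: card_fibre[OF s] card_bitstrings)
  finally show ?thesis
    by (simp add: power_add)
qed

lemma X_nonempty: "X \<noteq> {}"
  using card_X by auto

text \<open>\<open>(S, X)\<close> is uniform on \<open>S \<times> X\<close>, because all fibres of every \<open>f s\<close> have the same size.\<close>
definition pair_prob :: real where
  "pair_prob = 1 / (card S * 2 ^ (k + b))"

lemma pair_prob_nonneg: "0 \<le> pair_prob"
  by (simp add: pair_prob_def)

lemma card_S_card_X_pair_prob: "real (card S) * real (card X) * pair_prob = 1"
  using finite_S S_nonempty by (simp add: pair_prob_def card_X card_gt_0_iff)

lemma two_pow_k_card_S_pair_prob: "2 ^ k * real (card S) * pair_prob = 2 powr - real b"
proof -
  have "real (card S) > 0"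
    using finite_S S_nonempty by (simp add: card_gt_0_iff)
  then show ?thesis
    by (simp add: pair_prob_def power_add powr_minus powr_realpow divide_inverse) (simp add: field_simps)
qed

lemma set_MSX_pmf:
  assumes "(m, s, x) \<in> set_pmf (MSX_pmf X S k f)"
  shows "x \<in> X" "s \<in> S" "f s x = m"
proof -
  have "set_pmf (pmf_of_set {x\<in>X. f s x = m}) = {x\<in>X. f s x = m}"
    if "s \<in> S" "m \<in> bitstrings k" for s m
    using fibre_nonempty[OF that] finite_X by simp
  with assms show "x \<in> X" "s \<in> S" "f s x = m"
    unfolding MSX_pmf_def using finite_S S_nonempty finite_bitstrings bitstrings_nonempty by auto
qed

lemma nn_integral_MSX_pmf:
  "(\<integral>\<^sup>+ t. F t \<partial>MSX_pmf X S k f) = (\<Sum>s\<in>S. \<Sum>x\<in>X. F (f s x, s, x)) * ennreal pair_prob"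
proof -
  have "(\<integral>\<^sup>+ t. F t \<partial>MSX_pmf X S k f)
      = (\<Sum>m\<in>bitstrings k. (\<Sum>s\<in>S. (\<Sum>x\<in>{x\<in>X. f s x = m}. F (m, s, x)) / of_nat (2 ^ b))
           / of_nat (card S)) / of_nat (2 ^ k)"
    unfolding MSX_pmf_def
    using fibre_nonempty card_fibre finite_X finite_S S_nonempty finite_bitstrings bitstrings_nonempty
    by (simp add: nn_integral_pmf_of_set card_bitstrings cong: sum.cong)
  also have "\<dots> = (\<Sum>m\<in>bitstrings k. \<Sum>s\<in>S. \<Sum>x\<in>{x\<in>X. f s x = m}. F (m, s, x))
                    * (inverse (of_nat (2 ^ b)) * inverse (of_nat (card S)) * inverse (of_nat (2 ^ k)))"
    by (simp add: divide_ennreal_def sum_distrib_right mult.assoc)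
  also have "(\<Sum>m\<in>bitstrings k. \<Sum>s\<in>S. \<Sum>x\<in>{x\<in>X. f s x = m}. F (m, s, x)) = (\<Sum>s\<in>S. \<Sum>x\<in>X. F (f s x, s, x))"
    by (subst sum.swap) (auto simp: sum_over_fibres[symmetric] intro!: sum.cong)
  also have "(inverse (of_nat (2 ^ b)) * inverse (of_nat (card S)) * inverse (of_nat (2 ^ k)) :: ennreal)
             = ennreal pair_prob"
    using finite_S S_nonempty
    by (simp add: pair_prob_def ennreal_of_nat_eq_real_of_nat inverse_ennreal ennreal_mult'[symmetric]
        power_add divide_inverse card_gt_0_iff mult_ac)
  finally show ?thesis .
qed

abbreviation joint :: "((bool list \<times> 's \<times> 'x) \<times> 'z) measure" where
  "joint \<equiv> joint_MSXZ X S k f \<mu> \<omega>"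

abbreviation outcome_space :: "((bool list \<times> 's \<times> 'x) \<times> 'z) measure" where
  "outcome_space \<equiv> count_space UNIV \<Otimes>\<^sub>M \<mu>"

lemma prob_space_channel_output: "x \<in> X \<Longrightarrow> prob_space (density \<mu> (\<lambda>z. ennreal (\<omega> x z)))"
proof (rule prob_spaceI)
  assume x: "x \<in> X"
  have [measurable]: "\<omega> x \<in> borel_measurable \<mu>"
    using \<omega>_measurable[OF x] .
  have "emeasure (density \<mu> (\<lambda>z. ennreal (\<omega> x z))) (space \<mu>)
        = (\<integral>\<^sup>+ z. ennreal (\<omega> x z) * indicator (space \<mu>) z \<partial>\<mu>)"
    by (rule emeasure_density) auto
  also have "\<dots> = (\<integral>\<^sup>+ z. ennreal (\<omega> x z) \<partial>\<mu>)"
    by (rule nn_integral_cong) auto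
  also have "\<dots> = 1"
    using \<omega>_prob[OF x] .
  finally show "emeasure (density \<mu> (\<lambda>z. ennreal (\<omega> x z))) (space (density \<mu> (\<lambda>z. ennreal (\<omega> x z)))) = 1"
    by simp
qed

lemma measurable_Pair_output: "Pair t \<in> measurable (density \<mu> g) outcome_space"
  using measurable_Pair1'[of t "count_space UNIV" \<mu>] by (simp cong: measurable_cong_sets)

text \<open>On the support of \<^const>\<open>MSX_pmf\<close> this is the kernel in \<^const>\<open>joint_MSXZ\<close>; off the
  support the input is replaced by an arbitrary element of \<open>X\<close>, which makes it a probability
  kernel everywhere.\<close>
definition channel_kernel :: "bool list \<times> 's \<times> 'x \<Rightarrow> ((bool list \<times> 's \<times> 'x) \<times> 'z) measure" where
  "channel_kernel t = distr (density \<mu> (\<lambda>z. ennreal (\<omega> (if snd (snd t) \<in> X then snd (snd t) else SOME x. x \<in> X) z)))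
                         outcome_space (Pair t)"

lemma prob_space_channel_kernel: "prob_space (channel_kernel t)"
proof -
  have "(if snd (snd t) \<in> X then snd (snd t) else SOME x. x \<in> X) \<in> X"
    using X_nonempty by (auto intro: someI_ex)
  then show ?thesis
    unfolding channel_kernel_def
    by (rule prob_space.prob_space_distr[OF prob_space_channel_output measurable_Pair_output])
qed

lemma sets_channel_kernel: "sets (channel_kernel t) = sets outcome_space"
  by (simp add: channel_kernel_def)

lemma channel_kernel_measurable:
  "channel_kernel \<in> measurable (MSX_pmf X S k f) (subprob_algebra outcome_space)"
  by (simp add: space_subprob_algebra prob_space_imp_subprob_space prob_space_channel_kernel sets_channel_kernel)

lemma joint_eq_bind: "joint = measure_pmf (MSX_pmf X S k f) \<bind> channel_kernel"
  unfolding joint_MSXZ_def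
proof (rule bind_measure_pmf_cong[where N = outcome_space])
  fix t assume "t \<in> set_pmf (MSX_pmf X S k f)"
  then show "(case t of (m, s, x) \<Rightarrow> distr (density \<mu> (\<lambda>z. ennreal (\<omega> x z))) outcome_space (\<lambda>z. ((m, s, x), z)))
             = channel_kernel t"
    by (cases t) (simp add: channel_kernel_def set_MSX_pmf)
next
  fix t :: "bool list \<times> 's \<times> 'x"
  show "sets (case t of (m, s, x) \<Rightarrow> distr (density \<mu> (\<lambda>z. ennreal (\<omega> x z))) outcome_space (\<lambda>z. ((m, s, x), z)))
        = sets outcome_space"
    by (cases t) simp
qed (rule sets_channel_kernel)

lemma prob_space_joint: "prob_space joint"
  unfolding joint_eq_bind
  by (rule measure_pmf.prob_space_bind[OF _ channel_kernel_measurable]) (simp add: prob_space_channel_kernel)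

lemma sets_joint [measurable_cong]: "sets joint = sets outcome_space"
  unfolding joint_eq_bind by (rule sets_bind) (auto simp: sets_channel_kernel)

lemma space_joint: "space joint = space outcome_space"
  using sets_joint by (rule sets_eq_imp_space_eq)

lemma nn_integral_joint:
  assumes h [measurable]: "h \<in> borel_measurable outcome_space"
  shows "(\<integral>\<^sup>+ \<xi>. h \<xi> \<partial>joint)
         = (\<Sum>s\<in>S. \<Sum>x\<in>X. \<integral>\<^sup>+ z. ennreal (\<omega> x z) * h ((f s x, s, x), z) \<partial>\<mu>) * ennreal pair_prob"
proof -
  have "(\<integral>\<^sup>+ \<xi>. h \<xi> \<partial>joint) = (\<integral>\<^sup>+ t. \<integral>\<^sup>+ \<xi>. h \<xi> \<partial>channel_kernel t \<partial>MSX_pmf X S k f)"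
    unfolding joint_eq_bind by (rule nn_integral_bind[OF h channel_kernel_measurable])
  also have "\<dots> = (\<Sum>s\<in>S. \<Sum>x\<in>X. \<integral>\<^sup>+ \<xi>. h \<xi> \<partial>channel_kernel (f s x, s, x)) * ennreal pair_prob"
    by (rule nn_integral_MSX_pmf)
  also have "(\<Sum>s\<in>S. \<Sum>x\<in>X. \<integral>\<^sup>+ \<xi>. h \<xi> \<partial>channel_kernel (f s x, s, x))
             = (\<Sum>s\<in>S. \<Sum>x\<in>X. \<integral>\<^sup>+ z. ennreal (\<omega> x z) * h ((f s x, s, x), z) \<partial>\<mu>)"
  proof (intro sum.cong refl)
    fix s x assume x: "x \<in> X"
    have [measurable]: "\<omega> x \<in> borel_measurable \<mu>"
      using \<omega>_measurable[OF x] .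
    have h_distr: "h \<in> borel_measurable (distr (density \<mu> (\<lambda>z. ennreal (\<omega> x z))) outcome_space (Pair (f s x, s, x)))"
      by (simp cong: measurable_cong_sets)
    have [measurable]: "(\<lambda>z. h ((f s x, s, x), z)) \<in> borel_measurable \<mu>"
      by measurable
    have "channel_kernel (f s x, s, x) = distr (density \<mu> (\<lambda>z. ennreal (\<omega> x z))) outcome_space (Pair (f s x, s, x))"
      using x by (simp add: channel_kernel_def)
    then have "(\<integral>\<^sup>+ \<xi>. h \<xi> \<partial>channel_kernel (f s x, s, x)) = (\<integral>\<^sup>+ z. h ((f s x, s, x), z) \<partial>density \<mu> (\<lambda>z. ennreal (\<omega> x z)))"
      using nn_integral_distr[OF measurable_Pair_output h_distr] by simp
    also have "\<dots> = (\<integral>\<^sup>+ z. ennreal (\<omega> x z) * h ((f s x, s, x), z) \<partial>\<mu>)"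
      by (rule nn_integral_density) measurable
    finally show "(\<integral>\<^sup>+ \<xi>. h \<xi> \<partial>channel_kernel (f s x, s, x)) = (\<integral>\<^sup>+ z. ennreal (\<omega> x z) * h ((f s x, s, x), z) \<partial>\<mu>)" .
  qed
  finally show ?thesis .
qed

section \<open>The information density\<close>

abbreviation obs_space :: "('z \<times> 's) measure" where
  "obs_space \<equiv> \<mu> \<Otimes>\<^sub>M count_space UNIV"

definition msg :: "(bool list \<times> 's \<times> 'x) \<times> 'z \<Rightarrow> bool list" where
  "msg \<xi> = fst (fst \<xi>)"

definition obs :: "(bool list \<times> 's \<times> 'x) \<times> 'z \<Rightarrow> 'z \<times> 's" where
  "obs \<xi> = (snd \<xi>, fst (snd (fst \<xi>)))"

definition "msg_law = distr joint (count_space UNIV) msg"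
definition "obs_law = distr joint obs_space obs"
definition "msg_obs_law = distr joint (count_space UNIV \<Otimes>\<^sub>M obs_space) (\<lambda>\<xi>. (msg \<xi>, obs \<xi>))"

lemma msg_measurable [measurable]: "msg \<in> measurable outcome_space (count_space UNIV)"
  unfolding msg_def by (rule measurable_compose[OF measurable_fst]) simp

lemma obs_measurable [measurable]: "obs \<in> measurable outcome_space obs_space"
proof -
  have "(\<lambda>\<xi>::(bool list \<times> 's \<times> 'x) \<times> 'z. fst (snd (fst \<xi>))) \<in> measurable outcome_space (count_space UNIV)"
    by (rule measurable_compose[OF measurable_fst]) simp
  then show ?thesis
    unfolding obs_def by measurable
qed

lemma msg_measurable_joint [measurable]: "msg \<in> measurable joint (count_space UNIV)"
  and obs_measurable_joint [measurable]: "obs \<in> measurable joint obs_space"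
  by (simp_all cong: measurable_cong_sets[OF sets_joint refl])

lemma prob_space_msg_law: "prob_space msg_law"
  unfolding msg_law_def by (rule prob_space.prob_space_distr[OF prob_space_joint msg_measurable_joint])

lemma prob_space_obs_law: "prob_space obs_law"
  unfolding obs_law_def by (rule prob_space.prob_space_distr[OF prob_space_joint obs_measurable_joint])

lemma sets_msg_law_obs_law: "sets (msg_law \<Otimes>\<^sub>M obs_law) = sets (count_space UNIV \<Otimes>\<^sub>M obs_space)"
  by (rule sets_pair_measure_cong) (simp_all add: msg_law_def obs_law_def)

text \<open>\<^term>\<open>\<omega>\<close> is only nonnegative on \<^term>\<open>space \<mu>\<close>; its positive part is nonnegative everywhere.\<close>
definition dens :: "'x \<Rightarrow> 'z \<Rightarrow> real" where
  "dens x z = max 0 (\<omega> x z)"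

definition out_dens :: "'z \<Rightarrow> real" where
  "out_dens z = (\<Sum>x\<in>X. dens x z)"

definition fibre_dens :: "'s \<Rightarrow> bool list \<Rightarrow> 'z \<Rightarrow> real" where
  "fibre_dens s m z = (\<Sum>x\<in>X. if f s x = m then dens x z else 0)"

text \<open>The density of the law of \<open>(M, (Z, S))\<close> with respect to the product of its marginals.\<close>
definition info_dens :: "bool list \<times> 'z \<times> 's \<Rightarrow> real" where
  "info_dens y = 2 ^ k * fibre_dens (snd (snd y)) (fst y) (fst (snd y)) / out_dens (fst (snd y))"

lemma dens_nonneg: "0 \<le> dens x z"
  by (simp add: dens_def)

lemma ennreal_dens: "ennreal (dens x z) = ennreal (\<omega> x z)"
  by (simp add: dens_def max_def ennreal_neg)

lemma dens_measurable [measurable]: "x \<in> X \<Longrightarrow> dens x \<in> borel_measurable \<mu>"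
  unfolding dens_def[abs_def] using \<omega>_measurable by measurable

lemma out_dens_nonneg: "0 \<le> out_dens z"
  by (simp add: out_dens_def sum_nonneg dens_nonneg)

lemma out_dens_measurable [measurable]: "out_dens \<in> borel_measurable \<mu>"
  unfolding out_dens_def[abs_def] by (rule borel_measurable_sum) simp

lemma fibre_dens_nonneg: "0 \<le> fibre_dens s m z"
  by (simp add: fibre_dens_def sum_nonneg dens_nonneg)

lemma fibre_dens_le_out_dens: "fibre_dens s m z \<le> out_dens z"
  unfolding fibre_dens_def out_dens_def by (intro sum_mono) (auto simp: dens_nonneg)

lemma info_dens_nonneg: "0 \<le> info_dens y"
  by (simp add: info_dens_def fibre_dens_nonneg out_dens_nonneg)

lemma info_dens_le: "info_dens y \<le> 2 ^ k"
proof -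
  have "fibre_dens s m z / out_dens z \<le> 1" for s m z
    using fibre_dens_le_out_dens[of s m z] fibre_dens_nonneg[of s m z]
    by (cases "out_dens z = 0") simp_all
  then show ?thesis
    unfolding info_dens_def by (metis mult.right_neutral mult_left_mono times_divide_eq_right zero_le_numeral zero_le_power)
qed

lemma out_dens_mult_info_dens: "out_dens z * info_dens (m, z, s) = 2 ^ k * fibre_dens s m z"
proof (cases "out_dens z = 0")
  case True
  then have "\<forall>x\<in>X. dens x z = 0"
    using sum_nonneg_eq_0_iff[OF finite_X, of "\<lambda>x. dens x z"] dens_nonneg by (simp add: out_dens_def)
  then show ?thesis
    using True by (auto simp: fibre_dens_def intro!: sum.neutral)
qed (simp add: info_dens_def)

lemma info_dens_measurable [measurable]: "info_dens \<in> borel_measurable (count_space UNIV \<Otimes>\<^sub>M obs_space)"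
proof -
  define g where "g m y = 2 ^ k * fibre_dens (snd (snd y)) m (fst (snd y)) / out_dens (fst (snd y))"
    for m :: "bool list" and y :: "bool list \<times> 'z \<times> 's"
  have "(\<lambda>y. g (fst y) y) \<in> borel_measurable (count_space UNIV \<Otimes>\<^sub>M obs_space)"
  proof (rule measurable_compose_countable'[where I = UNIV and g = fst])
    fix m :: "bool list"
    have "(\<lambda>y::bool list \<times> 'z \<times> 's. fibre_dens (snd (snd y)) m (fst (snd y))) \<in> borel_measurable (count_space UNIV \<Otimes>\<^sub>M obs_space)"
      unfolding fibre_dens_def
    proof (rule borel_measurable_sum)
      fix x assume x: "x \<in> X"
      have [measurable]: "(\<lambda>y::bool list \<times> 'z \<times> 's. f (snd (snd y)) x) \<in> measurable (count_space UNIV \<Otimes>\<^sub>M obs_space) (count_space UNIV)"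
        by (rule measurable_compose[of _ _ "count_space UNIV"]) simp_all
      show "(\<lambda>y::bool list \<times> 'z \<times> 's. if f (snd (snd y)) x = m then dens x (fst (snd y)) else 0)
            \<in> borel_measurable (count_space UNIV \<Otimes>\<^sub>M obs_space)"
        using x by measurable
    qed
    then show "g m \<in> borel_measurable (count_space UNIV \<Otimes>\<^sub>M obs_space)"
      unfolding g_def by measurable
  qed auto
  then show ?thesis
    by (simp add: info_dens_def[abs_def] g_def)
qed

lemma nn_integral_msg_law:
  "(\<integral>\<^sup>+ m. G m \<partial>msg_law) = (\<Sum>m\<in>bitstrings k. G m) * ennreal (1 / 2 ^ k)"
proof -
  have "(\<integral>\<^sup>+ m. G m \<partial>msg_law) = (\<integral>\<^sup>+ \<xi>. G (msg \<xi>) \<partial>joint)"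
    unfolding msg_law_def by (rule nn_integral_distr) simp_all
  also have "\<dots> = (\<Sum>s\<in>S. \<Sum>x\<in>X. \<integral>\<^sup>+ z. ennreal (\<omega> x z) * G (f s x) \<partial>\<mu>) * ennreal pair_prob"
  proof -
    have "(\<lambda>\<xi>. G (msg \<xi>)) \<in> borel_measurable outcome_space"
      by (rule measurable_compose[OF msg_measurable]) simp
    then show ?thesis
      by (simp add: nn_integral_joint msg_def)
  qed
  also have "(\<Sum>s\<in>S. \<Sum>x\<in>X. \<integral>\<^sup>+ z. ennreal (\<omega> x z) * G (f s x) \<partial>\<mu>) = (\<Sum>s\<in>S. \<Sum>x\<in>X. G (f s x))"
    using \<omega>_measurable \<omega>_prob by (intro sum.cong refl) (simp add: nn_integral_multc)
  also have "\<dots> = (\<Sum>s\<in>S. of_nat (2 ^ b) * (\<Sum>m\<in>bitstrings k. G m))"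
  proof (intro sum.cong refl)
    fix s assume s: "s \<in> S"
    have "(\<Sum>x\<in>X. G (f s x)) = (\<Sum>m\<in>bitstrings k. \<Sum>x\<in>{x\<in>X. f s x = m}. G m)"
      by (subst sum_over_fibres[OF s, symmetric]) (auto intro: sum.cong)
    also have "\<dots> = of_nat (2 ^ b) * (\<Sum>m\<in>bitstrings k. G m)"
      by (simp add: card_fibre[OF s] sum_distrib_left)
    finally show "(\<Sum>x\<in>X. G (f s x)) = of_nat (2 ^ b) * (\<Sum>m\<in>bitstrings k. G m)" .
  qed
  also have "\<dots> * ennreal pair_prob = (\<Sum>m\<in>bitstrings k. G m) * (of_nat (card S * 2 ^ b) * ennreal pair_prob)"
    by (simp add: mult_ac)
  also have "of_nat (card S * 2 ^ b) * ennreal pair_prob = ennreal (1 / 2 ^ k)"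
    using finite_S S_nonempty
    by (simp add: pair_prob_def ennreal_of_nat_eq_real_of_nat ennreal_mult'[symmetric] power_add card_gt_0_iff)
  finally show ?thesis .
qed

lemma nn_integral_obs_law:
  assumes H [measurable]: "H \<in> borel_measurable obs_space"
  shows "(\<integral>\<^sup>+ y. H y \<partial>obs_law) = (\<Sum>s\<in>S. \<integral>\<^sup>+ z. ennreal (out_dens z) * H (z, s) \<partial>\<mu>) * ennreal pair_prob"
proof -
  have "(\<integral>\<^sup>+ y. H y \<partial>obs_law) = (\<integral>\<^sup>+ \<xi>. H (obs \<xi>) \<partial>joint)"
    unfolding obs_law_def by (rule nn_integral_distr) simp_all
  also have "\<dots> = (\<Sum>s\<in>S. \<Sum>x\<in>X. \<integral>\<^sup>+ z. ennreal (\<omega> x z) * H (z, s) \<partial>\<mu>) * ennreal pair_prob"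
  proof -
    have "(\<lambda>\<xi>. H (obs \<xi>)) \<in> borel_measurable outcome_space"
      by (rule measurable_compose[OF obs_measurable H])
    then show ?thesis
      by (simp add: nn_integral_joint obs_def)
  qed
  also have "(\<Sum>s\<in>S. \<Sum>x\<in>X. \<integral>\<^sup>+ z. ennreal (\<omega> x z) * H (z, s) \<partial>\<mu>)
             = (\<Sum>s\<in>S. \<integral>\<^sup>+ z. ennreal (out_dens z) * H (z, s) \<partial>\<mu>)"
  proof (intro sum.cong refl)
    fix s
    have "(\<Sum>x\<in>X. ennreal (\<omega> x z)) = ennreal (out_dens z)" for z
      unfolding out_dens_def ennreal_dens[symmetric] by (rule sum_ennreal) (simp add: dens_nonneg)
    then have "(\<integral>\<^sup>+ z. ennreal (out_dens z) * H (z, s) \<partial>\<mu>) = (\<integral>\<^sup>+ z. (\<Sum>x\<in>X. ennreal (\<omega> x z) * H (z, s)) \<partial>\<mu>)"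
      by (simp add: sum_distrib_right[symmetric])
    also have "\<dots> = (\<Sum>x\<in>X. \<integral>\<^sup>+ z. ennreal (\<omega> x z) * H (z, s) \<partial>\<mu>)"
      by (rule nn_integral_sum) (use \<omega>_measurable in measurable)
    finally show "(\<Sum>x\<in>X. \<integral>\<^sup>+ z. ennreal (\<omega> x z) * H (z, s) \<partial>\<mu>) = (\<integral>\<^sup>+ z. ennreal (out_dens z) * H (z, s) \<partial>\<mu>)"
      by simp
  qed
  finally show ?thesis .
qed

lemma ennreal_out_dens_mult_info_dens:
  "ennreal (out_dens z) * ennreal (info_dens (m, z, s))
   = 2 ^ k * (\<Sum>x\<in>X. if f s x = m then ennreal (\<omega> x z) else 0)"
proof -
  have "ennreal (out_dens z) * ennreal (info_dens (m, z, s)) = ennreal (2 ^ k * fibre_dens s m z)"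
    by (simp only: ennreal_mult[OF out_dens_nonneg info_dens_nonneg, symmetric] out_dens_mult_info_dens)
  also have "\<dots> = 2 ^ k * ennreal (fibre_dens s m z)"
    by (simp add: ennreal_mult fibre_dens_nonneg ennreal_power[symmetric])
  also have "ennreal (fibre_dens s m z) = (\<Sum>x\<in>X. ennreal (if f s x = m then dens x z else 0))"
    unfolding fibre_dens_def by (rule sum_ennreal[symmetric]) (simp add: dens_nonneg)
  also have "\<dots> = (\<Sum>x\<in>X. if f s x = m then ennreal (\<omega> x z) else 0)"
    by (intro sum.cong refl) (simp add: ennreal_dens)
  finally show ?thesis .
qed

lemma nn_integral_obs_law_info_dens:
  assumes H [measurable]: "H \<in> borel_measurable obs_space"
  shows "(\<integral>\<^sup>+ y. ennreal (info_dens (m, y)) * H y \<partial>obs_law)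
         = 2 ^ k * (\<Sum>s\<in>S. \<Sum>x\<in>X. if f s x = m then \<integral>\<^sup>+ z. ennreal (\<omega> x z) * H (z, s) \<partial>\<mu> else 0)
           * ennreal pair_prob"
proof -
  have "(\<lambda>y. info_dens (m, y)) \<in> borel_measurable obs_space"
    by (rule measurable_compose[OF measurable_Pair1' info_dens_measurable]) simp
  then have "(\<integral>\<^sup>+ y. ennreal (info_dens (m, y)) * H y \<partial>obs_law)
        = (\<Sum>s\<in>S. \<integral>\<^sup>+ z. ennreal (out_dens z) * (ennreal (info_dens (m, z, s)) * H (z, s)) \<partial>\<mu>) * ennreal pair_prob"
    by (subst nn_integral_obs_law) simp_all
  also have "(\<Sum>s\<in>S. \<integral>\<^sup>+ z. ennreal (out_dens z) * (ennreal (info_dens (m, z, s)) * H (z, s)) \<partial>\<mu>)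
             = (\<Sum>s\<in>S. 2 ^ k * (\<Sum>x\<in>X. if f s x = m then \<integral>\<^sup>+ z. ennreal (\<omega> x z) * H (z, s) \<partial>\<mu> else 0))"
  proof (intro sum.cong refl)
    fix s
    have [measurable]: "(\<lambda>z. H (z, s)) \<in> borel_measurable \<mu>"
      by measurable
    have "ennreal (out_dens z) * (ennreal (info_dens (m, z, s)) * H (z, s))
          = 2 ^ k * (\<Sum>x\<in>X. if f s x = m then ennreal (\<omega> x z) * H (z, s) else 0)" for z
      by (simp only: mult.assoc[symmetric] ennreal_out_dens_mult_info_dens)
        (simp add: mult.assoc sum_distrib_right if_distrib[where f = "\<lambda>a. a * _"] cong: if_cong)
    then have "(\<integral>\<^sup>+ z. ennreal (out_dens z) * (ennreal (info_dens (m, z, s)) * H (z, s)) \<partial>\<mu>)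
          = (\<integral>\<^sup>+ z. 2 ^ k * (\<Sum>x\<in>X. if f s x = m then ennreal (\<omega> x z) * H (z, s) else 0) \<partial>\<mu>)"
      by simp
    also have "\<dots> = 2 ^ k * (\<Sum>x\<in>X. \<integral>\<^sup>+ z. (if f s x = m then ennreal (\<omega> x z) * H (z, s) else 0) \<partial>\<mu>)"
      using \<omega>_measurable by (simp add: nn_integral_cmult nn_integral_sum)
    also have "\<dots> = 2 ^ k * (\<Sum>x\<in>X. if f s x = m then \<integral>\<^sup>+ z. ennreal (\<omega> x z) * H (z, s) \<partial>\<mu> else 0)"
      by (intro arg_cong[where f = "\<lambda>a. 2 ^ k * a"] sum.cong refl) simp
    finally show "(\<integral>\<^sup>+ z. ennreal (out_dens z) * (ennreal (info_dens (m, z, s)) * H (z, s)) \<partial>\<mu>)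
          = 2 ^ k * (\<Sum>x\<in>X. if f s x = m then \<integral>\<^sup>+ z. ennreal (\<omega> x z) * H (z, s) \<partial>\<mu> else 0)" .
  qed
  finally show ?thesis
    by (simp add: sum_distrib_left)
qed

lemma nn_integral_info_dens:
  assumes H [measurable]: "H \<in> borel_measurable (count_space UNIV \<Otimes>\<^sub>M obs_space)"
  shows "(\<integral>\<^sup>+ y. ennreal (info_dens y) * H y \<partial>(msg_law \<Otimes>\<^sub>M obs_law)) = (\<integral>\<^sup>+ \<xi>. H (msg \<xi>, obs \<xi>) \<partial>joint)"
proof -
  interpret obs_law: prob_space obs_law
    by (rule prob_space_obs_law)
  define I where "I s x m = (\<integral>\<^sup>+ z. ennreal (\<omega> x z) * H (m, z, s) \<partial>\<mu>)" for s x m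
  have H_Pair [measurable]: "(\<lambda>y. H (m, y)) \<in> borel_measurable obs_space" for m
    by (rule measurable_compose[OF measurable_Pair1' H]) simp
  have "(\<lambda>y. ennreal (info_dens y) * H y) \<in> borel_measurable (msg_law \<Otimes>\<^sub>M obs_law)"
    by (simp cong: measurable_cong_sets[OF sets_msg_law_obs_law refl])
  then have "(\<integral>\<^sup>+ y. ennreal (info_dens y) * H y \<partial>(msg_law \<Otimes>\<^sub>M obs_law))
        = (\<integral>\<^sup>+ m. \<integral>\<^sup>+ y. ennreal (info_dens (m, y)) * H (m, y) \<partial>obs_law \<partial>msg_law)"
    by (rule obs_law.nn_integral_fst[symmetric])
  also have "\<dots> = (\<Sum>m\<in>bitstrings k. \<integral>\<^sup>+ y. ennreal (info_dens (m, y)) * H (m, y) \<partial>obs_law) * ennreal (1 / 2 ^ k)"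
    by (rule nn_integral_msg_law)
  also have "(\<Sum>m\<in>bitstrings k. \<integral>\<^sup>+ y. ennreal (info_dens (m, y)) * H (m, y) \<partial>obs_law)
             = 2 ^ k * (\<Sum>s\<in>S. \<Sum>x\<in>X. \<Sum>m\<in>bitstrings k. if f s x = m then I s x m else 0) * ennreal pair_prob"
    unfolding I_def
    by (simp add: nn_integral_obs_law_info_dens sum_distrib_left sum_distrib_right mult.assoc
        sum.swap[of _ "bitstrings k"])
  also have "(\<Sum>s\<in>S. \<Sum>x\<in>X. \<Sum>m\<in>bitstrings k. if f s x = m then I s x m else 0) = (\<Sum>s\<in>S. \<Sum>x\<in>X. I s x (f s x))"
    by (intro sum.cong refl) (simp add: sum.delta' finite_bitstrings hash_in_bitstrings)
  also have "2 ^ k * (\<Sum>s\<in>S. \<Sum>x\<in>X. I s x (f s x)) * ennreal pair_prob * ennreal (1 / 2 ^ k)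
             = (\<Sum>s\<in>S. \<Sum>x\<in>X. I s x (f s x)) * ennreal pair_prob"
  proof -
    have "ennreal (2 ^ k) * ennreal (1 / 2 ^ k) = 1"
      by (simp add: ennreal_mult[symmetric])
    then have "(2 ^ k :: ennreal) * ennreal (1 / 2 ^ k) = 1"
      by (simp add: ennreal_power[symmetric])
    then show ?thesis
      by (metis (no_types, lifting) mult.assoc mult.commute mult_1)
  qed
  also have "\<dots> = (\<integral>\<^sup>+ \<xi>. H (msg \<xi>, obs \<xi>) \<partial>joint)"
  proof -
    have "(\<lambda>\<xi>. H (msg \<xi>, obs \<xi>)) \<in> borel_measurable outcome_space"
      by measurable
    then show ?thesis
      by (simp add: nn_integral_joint I_def msg_def obs_def)
  qed
  finally show ?thesis .
qed

lemma msg_obs_law_eq_density: "msg_obs_law = density (msg_law \<Otimes>\<^sub>M obs_law) info_dens"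
proof (rule measure_eqI)
  show "sets msg_obs_law = sets (density (msg_law \<Otimes>\<^sub>M obs_law) info_dens)"
    by (simp add: msg_obs_law_def sets_msg_law_obs_law)
next
  fix E assume "E \<in> sets msg_obs_law"
  then have E [measurable]: "E \<in> sets (count_space UNIV \<Otimes>\<^sub>M obs_space)"
    by (simp add: msg_obs_law_def)
  have "emeasure msg_obs_law E = (\<integral>\<^sup>+ y. indicator E y \<partial>msg_obs_law)"
    by (simp add: msg_obs_law_def)
  also have "\<dots> = (\<integral>\<^sup>+ \<xi>. indicator E (msg \<xi>, obs \<xi>) \<partial>joint)"
    unfolding msg_obs_law_def by (rule nn_integral_distr) simp_all
  also have "\<dots> = (\<integral>\<^sup>+ y. ennreal (info_dens y) * indicator E y \<partial>(msg_law \<Otimes>\<^sub>M obs_law))"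
    by (rule nn_integral_info_dens[symmetric]) simp
  also have "\<dots> = emeasure (density (msg_law \<Otimes>\<^sub>M obs_law) info_dens) E"
    by (rule emeasure_density[symmetric]) (simp_all add: sets_msg_law_obs_law cong: measurable_cong_sets[OF sets_msg_law_obs_law refl])
  finally show "emeasure msg_obs_law E = emeasure (density (msg_law \<Otimes>\<^sub>M obs_law) info_dens) E" .
qed

lemma mutual_information_eq_integral_log_info_dens:
  "prob_space.mutual_information joint 2 (count_space UNIV) obs_space msg obs
   = (\<integral> \<xi>. log 2 (info_dens (msg \<xi>, obs \<xi>)) \<partial>joint)"
proof -
  have "sigma_finite_measure (msg_law \<Otimes>\<^sub>M obs_law)"
    using prob_space_pair[OF prob_space_msg_law prob_space_obs_law] by (simp add: prob_space_imp_sigma_finite)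
  moreover have [measurable]: "info_dens \<in> borel_measurable (msg_law \<Otimes>\<^sub>M obs_law)"
    by (simp cong: measurable_cong_sets[OF sets_msg_law_obs_law refl])
  ultimately have "prob_space.mutual_information joint 2 (count_space UNIV) obs_space msg obs
      = (\<integral> y. info_dens y * log 2 (info_dens y) \<partial>(msg_law \<Otimes>\<^sub>M obs_law))"
    unfolding prob_space.mutual_information_def[OF prob_space_joint]
    by (simp add: msg_law_def[symmetric] obs_law_def[symmetric] msg_obs_law_def[symmetric]
        msg_obs_law_eq_density sigma_finite_measure.KL_density info_dens_nonneg)
  also have "\<dots> = (\<integral> y. log 2 (info_dens y) \<partial>density (msg_law \<Otimes>\<^sub>M obs_law) info_dens)"
    by (subst integral_density) (simp_all add: info_dens_nonneg)
  also have "\<dots> = (\<integral> \<xi>. log 2 (info_dens (msg \<xi>, obs \<xi>)) \<partial>joint)"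
    unfolding msg_obs_law_eq_density[symmetric] msg_obs_law_def by (rule integral_distr) measurable
  finally show ?thesis .
qed

lemma info_dens_pos:
  assumes x: "x \<in> X" and "0 < \<omega> x z"
  shows "0 < info_dens (f s x, z, s)"
proof -
  have "(if f s x = f s x then dens x z else 0) \<le> (\<Sum>x'\<in>X. if f s x' = f s x then dens x' z else 0)"
    by (rule member_le_sum) (auto simp: x finite_X dens_nonneg)
  then have "dens x z \<le> fibre_dens s (f s x) z"
    by (simp add: fibre_dens_def)
  moreover have "0 < dens x z"
    using assms by (simp add: dens_def)
  ultimately have "0 < fibre_dens s (f s x) z"
    by linarith
  moreover have "0 < out_dens z"
    using \<open>0 < fibre_dens s (f s x) z\<close> fibre_dens_le_out_dens by (rule less_le_trans)
  ultimately show ?thesis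
    by (simp add: info_dens_def)
qed

lemma AE_info_dens_pos: "AE \<xi> in joint. 0 < info_dens (msg \<xi>, obs \<xi>)"
proof (rule AE_I')
  define N where "N = {\<xi> \<in> space outcome_space. info_dens (msg \<xi>, obs \<xi>) \<le> 0}"
  have [measurable]: "N \<in> sets outcome_space"
    unfolding N_def by measurable
  have "emeasure joint N = (\<integral>\<^sup>+ \<xi>. indicator N \<xi> \<partial>joint)"
    by (simp add: sets_joint)
  also have "\<dots> = (\<Sum>s\<in>S. \<Sum>x\<in>X. \<integral>\<^sup>+ z. ennreal (\<omega> x z) * indicator N ((f s x, s, x), z) \<partial>\<mu>) * ennreal pair_prob"
    by (rule nn_integral_joint) measurable
  also have "(\<Sum>s\<in>S. \<Sum>x\<in>X. \<integral>\<^sup>+ z. ennreal (\<omega> x z) * indicator N ((f s x, s, x), z) \<partial>\<mu>) = 0"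
  proof (intro sum.neutral ballI)
    fix s x assume "x \<in> X"
    then have integrand_zero: "ennreal (\<omega> x z) * indicator N ((f s x, s, x), z) = 0" for z
      using info_dens_pos[of x z s] by (cases "0 < \<omega> x z") (auto simp: N_def msg_def obs_def ennreal_neg)
    show "(\<integral>\<^sup>+ z. ennreal (\<omega> x z) * indicator N ((f s x, s, x), z) \<partial>\<mu>) = 0"
      by (simp only: integrand_zero) simp
  qed
  finally show "N \<in> null_sets joint"
    by (simp add: null_sets_def sets_joint)
  show "{\<xi> \<in> space joint. \<not> 0 < info_dens (msg \<xi>, obs \<xi>)} \<subseteq> N"
    by (auto simp: N_def space_joint)
qed

section \<open>Bounding the information density on an admissible set\<close>

definition admissible :: "real \<Rightarrow> ('x \<times> 'z) set \<Rightarrow> bool" where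
  "admissible \<epsilon> T \<longleftrightarrow> T \<in> sets (count_space X \<Otimes>\<^sub>M \<mu>) \<and>
     (\<forall>x\<in>X. emeasure (density \<mu> (\<lambda>z. ennreal (\<omega> x z))) {z \<in> space \<mu>. (x, z) \<in> T} \<ge> ennreal (1 - \<epsilon>))"

definition max_dens_integral :: "('x \<times> 'z) set \<Rightarrow> ennreal" where
  "max_dens_integral T = (\<integral>\<^sup>+ z. Max ((\<lambda>x. ennreal (restrict_density T \<omega> x z)) ` X) \<partial>\<mu>)"

lemma Imax_smooth_eq_INF:
  "Imax_smooth \<epsilon> \<mu> X \<omega> = (INF T\<in>{T. admissible \<epsilon> T}. log2e (max_dens_integral T))"
  by (simp add: Imax_smooth_def Imax_def admissible_def max_dens_integral_def)

definition indicator_XZ :: "('x \<times> 'z) set \<Rightarrow> (bool list \<times> 's \<times> 'x) \<times> 'z \<Rightarrow> real" where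
  "indicator_XZ T \<xi> = indicator T (snd (snd (fst \<xi>)), snd \<xi>)"

lemma indicator_XZ_bounds: "0 \<le> indicator_XZ T \<xi>" "indicator_XZ T \<xi> \<le> 1"
  by (simp_all add: indicator_XZ_def)

lemma sets_pair_count_space_X:
  "T \<in> sets (count_space X \<Otimes>\<^sub>M \<mu>) \<Longrightarrow> T \<in> sets (count_space UNIV \<Otimes>\<^sub>M \<mu>)"
  using finite_X by (intro sets_pair_count_space_UNIV) (auto intro: countable_finite)

lemma indicator_XZ_measurable:
  assumes "T \<in> sets (count_space X \<Otimes>\<^sub>M \<mu>)"
  shows "indicator_XZ T \<in> borel_measurable outcome_space"
proof -
  have "(\<lambda>\<xi>::(bool list \<times> 's \<times> 'x) \<times> 'z. snd (snd (fst \<xi>))) \<in> measurable outcome_space (count_space UNIV)"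
    by (rule measurable_compose[OF measurable_fst]) simp
  then have "(\<lambda>\<xi>::(bool list \<times> 's \<times> 'x) \<times> 'z. (snd (snd (fst \<xi>)), snd \<xi>)) \<in> measurable outcome_space (count_space UNIV \<Otimes>\<^sub>M \<mu>)"
    by measurable
  then show ?thesis
    unfolding indicator_XZ_def[abs_def]
    by (rule measurable_compose[OF _ borel_measurable_indicator[OF sets_pair_count_space_X[OF assms]]])
qed

lemma indicator_XZ_measurable_joint [measurable]:
  "T \<in> sets (count_space X \<Otimes>\<^sub>M \<mu>) \<Longrightarrow> indicator_XZ T \<in> borel_measurable joint"
  using indicator_XZ_measurable by (simp cong: measurable_cong_sets[OF sets_joint refl])

lemma indicator_section_measurable:
  assumes "T \<in> sets (count_space X \<Otimes>\<^sub>M \<mu>)"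
  shows "(\<lambda>z. indicator T (x, z) :: real) \<in> borel_measurable \<mu>"
  by (rule measurable_compose[OF measurable_Pair1' borel_measurable_indicator[OF sets_pair_count_space_X[OF assms]]]) simp

lemma emeasure_channel_section:
  assumes T: "T \<in> sets (count_space X \<Otimes>\<^sub>M \<mu>)" and x: "x \<in> X"
  shows "emeasure (density \<mu> (\<lambda>z. ennreal (\<omega> x z))) {z \<in> space \<mu>. (x, z) \<in> T}
         = (\<integral>\<^sup>+ z. ennreal (restrict_density T \<omega> x z) \<partial>\<mu>)"
proof -
  have [measurable]: "\<omega> x \<in> borel_measurable \<mu>"
    using \<omega>_measurable[OF x] .
  have "{z \<in> space \<mu>. (x, z) \<in> T} = Pair x -` T \<inter> space \<mu>"
    by auto
  then have "{z \<in> space \<mu>. (x, z) \<in> T} \<in> sets \<mu>"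
    using sets_Pair1[OF T] by simp
  then have "emeasure (density \<mu> (\<lambda>z. ennreal (\<omega> x z))) {z \<in> space \<mu>. (x, z) \<in> T}
             = (\<integral>\<^sup>+ z. ennreal (\<omega> x z) * indicator {z \<in> space \<mu>. (x, z) \<in> T} z \<partial>\<mu>)"
    by (rule emeasure_density[rotated]) measurable
  also have "\<dots> = (\<integral>\<^sup>+ z. ennreal (restrict_density T \<omega> x z) \<partial>\<mu>)"
    by (rule nn_integral_cong) (simp add: restrict_density_def indicator_def)
  finally show ?thesis .
qed

lemma admissible_max_dens_integral_ge:
  assumes "admissible \<epsilon> T"
  shows "ennreal (1 - \<epsilon>) \<le> max_dens_integral T"
proof -
  obtain x where x: "x \<in> X"
    using X_nonempty by auto
  have "ennreal (1 - \<epsilon>) \<le> (\<integral>\<^sup>+ z. ennreal (restrict_density T \<omega> x z) \<partial>\<mu>)"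
    using assms x emeasure_channel_section[of T x] unfolding admissible_def by auto
  also have "\<dots> \<le> max_dens_integral T"
    unfolding max_dens_integral_def using x finite_X by (intro nn_integral_mono Max_ge) auto
  finally show ?thesis .
qed

lemma nn_integral_indicator_XZ:
  assumes T: "T \<in> sets (count_space X \<Otimes>\<^sub>M \<mu>)"
  shows "(\<integral>\<^sup>+ \<xi>. ennreal (indicator_XZ T \<xi>) \<partial>joint)
         = of_nat (card S) * (\<Sum>x\<in>X. \<integral>\<^sup>+ z. ennreal (restrict_density T \<omega> x z) \<partial>\<mu>) * ennreal pair_prob"
proof -
  have "(\<lambda>\<xi>. ennreal (indicator_XZ T \<xi>)) \<in> borel_measurable outcome_space"
    using indicator_XZ_measurable[OF T] by measurable
  then have "(\<integral>\<^sup>+ \<xi>. ennreal (indicator_XZ T \<xi>) \<partial>joint)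
        = (\<Sum>s\<in>S. \<Sum>x\<in>X. \<integral>\<^sup>+ z. ennreal (\<omega> x z) * ennreal (indicator T (x, z)) \<partial>\<mu>) * ennreal pair_prob"
    by (simp add: nn_integral_joint indicator_XZ_def)
  also have "\<dots> = of_nat (card S) * (\<Sum>x\<in>X. \<integral>\<^sup>+ z. ennreal (restrict_density T \<omega> x z) \<partial>\<mu>) * ennreal pair_prob"
    by (simp add: restrict_density_eq_indicator ennreal_mult'' sum_distrib_left)
  finally show ?thesis .
qed

lemma admissible_nn_integral_indicator_XZ_ge:
  assumes "admissible \<epsilon> T"
  shows "ennreal (1 - \<epsilon>) \<le> (\<integral>\<^sup>+ \<xi>. ennreal (indicator_XZ T \<xi>) \<partial>joint)"
proof -
  have T: "T \<in> sets (count_space X \<Otimes>\<^sub>M \<mu>)"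
    using assms by (simp add: admissible_def)
  have "ennreal (1 - \<epsilon>) = of_nat (card S) * (\<Sum>x\<in>X. ennreal (1 - \<epsilon>)) * ennreal pair_prob"
    using card_S_card_X_pair_prob pair_prob_nonneg
    by (simp add: ennreal_of_nat_eq_real_of_nat ennreal_mult[symmetric] mult_ac)
  also have "\<dots> \<le> of_nat (card S) * (\<Sum>x\<in>X. \<integral>\<^sup>+ z. ennreal (restrict_density T \<omega> x z) \<partial>\<mu>) * ennreal pair_prob"
    using assms emeasure_channel_section[OF T] unfolding admissible_def
    by (intro mult_right_mono mult_left_mono sum_mono) auto
  also have "\<dots> = (\<integral>\<^sup>+ \<xi>. ennreal (indicator_XZ T \<xi>) \<partial>joint)"
    by (rule nn_integral_indicator_XZ[OF T, symmetric])
  finally show ?thesis .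
qed

lemma restrict_density_nonneg: "z \<in> space \<mu> \<Longrightarrow> x \<in> X \<Longrightarrow> 0 \<le> restrict_density T \<omega> x z"
  by (simp add: restrict_density_def \<omega>_nonneg)

lemma restricted_info_dens_sum_le:
  assumes z: "z \<in> space \<mu>"
  shows "(\<Sum>s\<in>S. \<Sum>x\<in>X. restrict_density T \<omega> x z * info_dens (f s x, z, s))
         \<le> card S * (\<Sum>x\<in>X. restrict_density T \<omega> x z) + 2 ^ k * card S * Max ((\<lambda>x. restrict_density T \<omega> x z) ` X)"
proof -
  have "info_dens (f s x, z, s) = 2 ^ k * (\<Sum>x'\<in>X. if f s x' = f s x then dens x' z else 0) / (\<Sum>x'\<in>X. dens x' z)"
    for s x
    by (simp add: info_dens_def fibre_dens_def out_dens_def)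
  moreover have "restrict_density T \<omega> x z \<le> dens x z" for x
    by (simp add: restrict_density_def dens_def)
  moreover have "restrict_density T \<omega> x z \<le> Max ((\<lambda>x. restrict_density T \<omega> x z) ` X)" if "x \<in> X" for x
    using that finite_X by (intro Max_ge) auto
  moreover have "0 \<le> Max ((\<lambda>x. restrict_density T \<omega> x z) ` X)"
    using X_nonempty finite_X restrict_density_nonneg[OF z] by (auto simp: Max_ge_iff)
  ultimately show ?thesis
    using restrict_density_nonneg[OF z] dens_nonneg
    by (simp only:) (rule UHF_normalized_fibre_sum_le[OF uhf finite_X finite_S])
qed

lemma ennreal_restricted_info_dens_sum_le:
  assumes z: "z \<in> space \<mu>"
  shows "ennreal (\<Sum>s\<in>S. \<Sum>x\<in>X. restrict_density T \<omega> x z * info_dens (f s x, z, s))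
         \<le> of_nat (card S) * (\<Sum>x\<in>X. ennreal (restrict_density T \<omega> x z))
           + ennreal (2 ^ k * real (card S)) * Max ((\<lambda>x. ennreal (restrict_density T \<omega> x z)) ` X)"
proof -
  define a where "a x = restrict_density T \<omega> x z" for x
  define M where "M = Max (a ` X)"
  have a_nonneg: "x \<in> X \<Longrightarrow> 0 \<le> a x" for x
    using restrict_density_nonneg[OF z] by (simp add: a_def)
  have "0 \<le> M"
    using X_nonempty finite_X a_nonneg by (auto simp: M_def Max_ge_iff)
  have "ennreal (\<Sum>s\<in>S. \<Sum>x\<in>X. a x * info_dens (f s x, z, s))
        \<le> ennreal (card S * (\<Sum>x\<in>X. a x) + 2 ^ k * card S * M)"
    using restricted_info_dens_sum_le[OF z] by (intro ennreal_leI) (simp add: a_def M_def)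
  also have "\<dots> = of_nat (card S) * ennreal (\<Sum>x\<in>X. a x) + ennreal (2 ^ k * real (card S)) * ennreal M"
    using a_nonneg \<open>0 \<le> M\<close>
    by (simp add: ennreal_plus ennreal_mult ennreal_of_nat_eq_real_of_nat sum_nonneg)
  also have "ennreal (\<Sum>x\<in>X. a x) = (\<Sum>x\<in>X. ennreal (a x))"
    using a_nonneg by (rule sum_ennreal[symmetric])
  also have "ennreal M = Max ((\<lambda>x. ennreal (a x)) ` X)"
    unfolding M_def using finite_X X_nonempty
    by (subst mono_Max_commute[OF monotone_ennreal]) (auto simp: image_image)
  finally show ?thesis
    by (simp add: a_def)
qed

lemma nn_integral_indicator_XZ_info_dens:
  assumes T: "T \<in> sets (count_space X \<Otimes>\<^sub>M \<mu>)"
  shows "(\<integral>\<^sup>+ \<xi>. ennreal (indicator_XZ T \<xi> * info_dens (msg \<xi>, obs \<xi>)) \<partial>joint)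
         = (\<integral>\<^sup>+ z. ennreal (\<Sum>s\<in>S. \<Sum>x\<in>X. restrict_density T \<omega> x z * info_dens (f s x, z, s)) \<partial>\<mu>)
           * ennreal pair_prob"
proof -
  have [measurable]: "(\<lambda>z. indicator T (x, z) :: real) \<in> borel_measurable \<mu>" for x
    by (rule indicator_section_measurable[OF T])
  have "(\<lambda>\<xi>. ennreal (indicator_XZ T \<xi> * info_dens (msg \<xi>, obs \<xi>))) \<in> borel_measurable outcome_space"
    using indicator_XZ_measurable[OF T] by measurable
  then have "(\<integral>\<^sup>+ \<xi>. ennreal (indicator_XZ T \<xi> * info_dens (msg \<xi>, obs \<xi>)) \<partial>joint)
        = (\<Sum>s\<in>S. \<Sum>x\<in>X. \<integral>\<^sup>+ z. ennreal (\<omega> x z) * ennreal (indicator T (x, z) * info_dens (f s x, z, s)) \<partial>\<mu>)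
          * ennreal pair_prob"
    by (simp add: nn_integral_joint indicator_XZ_def msg_def obs_def)
  also have "(\<Sum>s\<in>S. \<Sum>x\<in>X. \<integral>\<^sup>+ z. ennreal (\<omega> x z) * ennreal (indicator T (x, z) * info_dens (f s x, z, s)) \<partial>\<mu>)
      = (\<Sum>s\<in>S. \<Sum>x\<in>X. \<integral>\<^sup>+ z. ennreal (restrict_density T \<omega> x z * info_dens (f s x, z, s)) \<partial>\<mu>)"
    by (intro sum.cong refl nn_integral_cong)
      (simp add: restrict_density_eq_indicator ennreal_mult' \<omega>_nonneg mult.assoc)
  also have "\<dots> = (\<integral>\<^sup>+ z. (\<Sum>s\<in>S. \<Sum>x\<in>X. ennreal (restrict_density T \<omega> x z * info_dens (f s x, z, s))) \<partial>\<mu>)"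
    using \<omega>_measurable by (simp add: nn_integral_sum restrict_density_eq_indicator)
  also have "\<dots> = (\<integral>\<^sup>+ z. ennreal (\<Sum>s\<in>S. \<Sum>x\<in>X. restrict_density T \<omega> x z * info_dens (f s x, z, s)) \<partial>\<mu>)"
    by (intro nn_integral_cong) (simp add: sum_ennreal restrict_density_nonneg info_dens_nonneg sum_nonneg)
  finally show ?thesis .
qed

lemma nn_integral_indicator_XZ_info_dens_le:
  assumes T: "T \<in> sets (count_space X \<Otimes>\<^sub>M \<mu>)"
  shows "(\<integral>\<^sup>+ \<xi>. ennreal (indicator_XZ T \<xi> * info_dens (msg \<xi>, obs \<xi>)) \<partial>joint)
         \<le> (\<integral>\<^sup>+ \<xi>. ennreal (indicator_XZ T \<xi>) \<partial>joint) + ennreal (2 powr - real b) * max_dens_integral T"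
proof -
  have [measurable]: "(\<lambda>z. restrict_density T \<omega> x z) \<in> borel_measurable \<mu>" if "x \<in> X" for x
    unfolding restrict_density_eq_indicator using \<omega>_measurable[OF that] indicator_section_measurable[OF T]
    by measurable
  have "(\<integral>\<^sup>+ z. ennreal (\<Sum>s\<in>S. \<Sum>x\<in>X. restrict_density T \<omega> x z * info_dens (f s x, z, s)) \<partial>\<mu>)
        \<le> (\<integral>\<^sup>+ z. of_nat (card S) * (\<Sum>x\<in>X. ennreal (restrict_density T \<omega> x z))
              + ennreal (2 ^ k * real (card S)) * Max ((\<lambda>x. ennreal (restrict_density T \<omega> x z)) ` X) \<partial>\<mu>)"
    by (intro nn_integral_mono ennreal_restricted_info_dens_sum_le)
  also have "\<dots> = of_nat (card S) * (\<Sum>x\<in>X. \<integral>\<^sup>+ z. ennreal (restrict_density T \<omega> x z) \<partial>\<mu>)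
                  + ennreal (2 ^ k * real (card S)) * max_dens_integral T"
    unfolding max_dens_integral_def
    by (subst nn_integral_add) (auto intro!: borel_measurable_Max simp: finite_X nn_integral_cmult nn_integral_sum)
  finally have "(\<integral>\<^sup>+ \<xi>. ennreal (indicator_XZ T \<xi> * info_dens (msg \<xi>, obs \<xi>)) \<partial>joint)
      \<le> (of_nat (card S) * (\<Sum>x\<in>X. \<integral>\<^sup>+ z. ennreal (restrict_density T \<omega> x z) \<partial>\<mu>)
        + ennreal (2 ^ k * real (card S)) * max_dens_integral T) * ennreal pair_prob"
    unfolding nn_integral_indicator_XZ_info_dens[OF T] by (rule mult_right_mono) simp
  also have "\<dots> = (\<integral>\<^sup>+ \<xi>. ennreal (indicator_XZ T \<xi>) \<partial>joint)
                  + (ennreal (2 ^ k * real (card S)) * ennreal pair_prob) * max_dens_integral T"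
    by (simp add: nn_integral_indicator_XZ[OF T] distrib_right distrib_left mult_ac)
  also have "ennreal (2 ^ k * real (card S)) * ennreal pair_prob = ennreal (2 powr - real b)"
    using pair_prob_nonneg by (simp add: ennreal_mult[symmetric] two_pow_k_card_S_pair_prob)
  finally show ?thesis .
qed

lemma integral_indicator_XZ_eq:
  assumes "T \<in> sets (count_space X \<Otimes>\<^sub>M \<mu>)"
  shows "(\<integral> \<xi>. indicator_XZ T \<xi> \<partial>joint) = enn2real (\<integral>\<^sup>+ \<xi>. ennreal (indicator_XZ T \<xi>) \<partial>joint)"
  using assms by (intro integral_eq_nn_integral) (auto simp: indicator_XZ_bounds)

lemma nn_integral_indicator_XZ_finite: "(\<integral>\<^sup>+ \<xi>. ennreal (indicator_XZ T \<xi>) \<partial>joint) \<noteq> \<infinity>"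
proof -
  interpret prob_space joint
    by (rule prob_space_joint)
  have "(\<integral>\<^sup>+ \<xi>. ennreal (indicator_XZ T \<xi>) \<partial>joint) \<le> (\<integral>\<^sup>+ \<xi>. 1 \<partial>joint)"
    by (intro nn_integral_mono) (simp add: indicator_XZ_bounds)
  then show ?thesis
    using top.extremum_uniqueI by fastforce
qed

lemma admissible_integral_indicator_XZ_ge:
  assumes "admissible \<epsilon> T"
  shows "1 - \<epsilon> \<le> (\<integral> \<xi>. indicator_XZ T \<xi> \<partial>joint)"
proof -
  have "1 - \<epsilon> \<le> enn2real (ennreal (1 - \<epsilon>))"
    by (cases "0 \<le> 1 - \<epsilon>") (auto simp: ennreal_neg)
  also have "\<dots> \<le> enn2real (\<integral>\<^sup>+ \<xi>. ennreal (indicator_XZ T \<xi>) \<partial>joint)"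
    using admissible_nn_integral_indicator_XZ_ge[OF assms] nn_integral_indicator_XZ_finite
    by (intro enn2real_mono) (auto simp: less_top)
  also have "\<dots> = (\<integral> \<xi>. indicator_XZ T \<xi> \<partial>joint)"
    using assms by (simp add: admissible_def integral_indicator_XZ_eq)
  finally show ?thesis .
qed

lemma integral_indicator_XZ_info_dens_le:
  assumes T: "T \<in> sets (count_space X \<Otimes>\<^sub>M \<mu>)" and fin: "max_dens_integral T \<noteq> \<infinity>"
  shows "(\<integral> \<xi>. indicator_XZ T \<xi> * info_dens (msg \<xi>, obs \<xi>) \<partial>joint)
         \<le> (\<integral> \<xi>. indicator_XZ T \<xi> \<partial>joint) + 2 powr - real b * enn2real (max_dens_integral T)"
proof -
  have "(\<integral> \<xi>. indicator_XZ T \<xi> * info_dens (msg \<xi>, obs \<xi>) \<partial>joint)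
        = enn2real (\<integral>\<^sup>+ \<xi>. ennreal (indicator_XZ T \<xi> * info_dens (msg \<xi>, obs \<xi>)) \<partial>joint)"
    using T by (intro integral_eq_nn_integral) (auto simp: indicator_XZ_bounds info_dens_nonneg)
  also have "\<dots> \<le> enn2real ((\<integral>\<^sup>+ \<xi>. ennreal (indicator_XZ T \<xi>) \<partial>joint)
                            + ennreal (2 powr - real b) * max_dens_integral T)"
    using nn_integral_indicator_XZ_info_dens_le[OF T] nn_integral_indicator_XZ_finite fin
    by (intro enn2real_mono) (auto simp: less_top ennreal_mult_less_top)
  also have "\<dots> = (\<integral> \<xi>. indicator_XZ T \<xi> \<partial>joint) + 2 powr - real b * enn2real (max_dens_integral T)"
    using nn_integral_indicator_XZ_finite fin T
    by (subst enn2real_plus) (auto simp: less_top ennreal_mult_less_top enn2real_mult integral_indicator_XZ_eq)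
  finally show ?thesis .
qed

lemma integral_log_info_dens_le_max:
  assumes T [measurable]: "T \<in> sets (count_space X \<Otimes>\<^sub>M \<mu>)"
  defines "t \<equiv> indicator_XZ T" and "G \<equiv> \<lambda>\<xi>. info_dens (msg \<xi>, obs \<xi>)"
  shows "(\<integral> \<xi>. log 2 (G \<xi>) \<partial>joint)
         \<le> max 0 (((\<integral> \<xi>. t \<xi> * G \<xi> \<partial>joint) - (\<integral> \<xi>. t \<xi> \<partial>joint)) / ln 2 + k * (1 - (\<integral> \<xi>. t \<xi> \<partial>joint)))"
proof -
  interpret joint: prob_space joint
    by (rule prob_space_joint)
  define R where "R \<xi> = (t \<xi> * G \<xi> - t \<xi>) / ln 2 + k - k * t \<xi>" for \<xi>
  have [measurable]: "t \<in> borel_measurable joint" "G \<in> borel_measurable joint"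
    unfolding t_def G_def by measurable
  have t_bounds: "0 \<le> t \<xi>" "t \<xi> \<le> 1" and G_bounds: "0 \<le> G \<xi>" "G \<xi> \<le> 2 ^ k" for \<xi>
    by (simp_all add: t_def G_def indicator_XZ_bounds info_dens_nonneg info_dens_le)
  have int_t: "integrable joint t"
    using t_bounds by (intro joint.integrable_const_bound[where B = 1]) auto
  have "t \<xi> * G \<xi> \<le> 1 * 2 ^ k" for \<xi>
    using t_bounds G_bounds by (intro mult_mono) auto
  then have int_tG: "integrable joint (\<lambda>\<xi>. t \<xi> * G \<xi>)"
    using t_bounds G_bounds by (intro joint.integrable_const_bound[where B = "2 ^ k"]) auto
  have "AE \<xi> in joint. log 2 (G \<xi>) \<le> R \<xi>"
    using AE_info_dens_pos
  proof eventually_elim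
    case (elim \<xi>)
    then have "log 2 (G \<xi>) \<le> t \<xi> * ((G \<xi> - 1) / ln 2) + (1 - t \<xi>) * k"
      using t_bounds G_bounds by (intro log2_le_convex_bound) (simp_all add: G_def)
    then show ?case
      by (simp add: R_def field_simps)
  qed
  moreover have "integrable joint R"
    unfolding R_def[abs_def] using int_t int_tG by simp
  ultimately have "(\<integral> \<xi>. log 2 (G \<xi>) \<partial>joint) \<le> (\<integral> \<xi>. R \<xi> \<partial>joint) \<or> (\<integral> \<xi>. log 2 (G \<xi>) \<partial>joint) = 0"
    using integral_mono_AE not_integrable_integral_eq by blast
  moreover have "(\<integral> \<xi>. R \<xi> \<partial>joint)
      = ((\<integral> \<xi>. t \<xi> * G \<xi> \<partial>joint) - (\<integral> \<xi>. t \<xi> \<partial>joint)) / ln 2 + k * (1 - (\<integral> \<xi>. t \<xi> \<partial>joint))"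
    unfolding R_def[abs_def] using int_t int_tG by (simp add: joint.prob_space algebra_simps)
  ultimately show ?thesis
    by linarith
qed

lemma integral_log_info_dens_le:
  assumes adm: "admissible \<epsilon> T" and fin: "max_dens_integral T \<noteq> \<infinity>" and "0 \<le> \<epsilon>"
  shows "(\<integral> \<xi>. log 2 (info_dens (msg \<xi>, obs \<xi>)) \<partial>joint)
         \<le> 1 / ln 2 * (2 powr - real b * enn2real (max_dens_integral T)) + \<epsilon> * k"
proof -
  have T: "T \<in> sets (count_space X \<Otimes>\<^sub>M \<mu>)"
    using adm by (simp add: admissible_def)
  have "((\<integral> \<xi>. indicator_XZ T \<xi> * info_dens (msg \<xi>, obs \<xi>) \<partial>joint) - (\<integral> \<xi>. indicator_XZ T \<xi> \<partial>joint)) / ln 2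
        \<le> 1 / ln 2 * (2 powr - real b * enn2real (max_dens_integral T))"
    using integral_indicator_XZ_info_dens_le[OF T fin] by (simp add: divide_right_mono)
  moreover have "k * (1 - (\<integral> \<xi>. indicator_XZ T \<xi> \<partial>joint)) \<le> \<epsilon> * k"
    using admissible_integral_indicator_XZ_ge[OF adm] mult_left_mono[of "1 - (\<integral> \<xi>. indicator_XZ T \<xi> \<partial>joint)" \<epsilon> "real k"]
    by (simp add: mult.commute)
  ultimately have "max 0 (((\<integral> \<xi>. indicator_XZ T \<xi> * info_dens (msg \<xi>, obs \<xi>) \<partial>joint)
                         - (\<integral> \<xi>. indicator_XZ T \<xi> \<partial>joint)) / ln 2 + k * (1 - (\<integral> \<xi>. indicator_XZ T \<xi> \<partial>joint)))
                   \<le> 1 / ln 2 * (2 powr - real b * enn2real (max_dens_integral T)) + \<epsilon> * k"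
    using \<open>0 \<le> \<epsilon>\<close> by (auto intro: add_mono)
  then show ?thesis
    using integral_log_info_dens_le_max[OF T] by linarith
qed

lemma mutual_information_le:
  assumes "admissible \<epsilon> T" "max_dens_integral T \<noteq> \<infinity>" "0 \<le> \<epsilon>"
  shows "prob_space.mutual_information joint 2 (count_space UNIV) obs_space msg obs
         \<le> 1 / ln 2 * 2 powr - real b * enn2real (max_dens_integral T) + \<epsilon> * k"
  using integral_log_info_dens_le[OF assms] by (simp add: mutual_information_eq_integral_log_info_dens mult.assoc)

end

theorem lemma4:
  fixes X :: "'x set" and S :: "'s set" and k b :: nat
    and f :: "'s \<Rightarrow> 'x \<Rightarrow> bool list"
    and \<mu> :: "'z measure" and \<omega> :: "'x \<Rightarrow> 'z \<Rightarrow> real" and \<epsilon> :: real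
  assumes X_fin: "finite X"
    and S_fin: "finite S" and S_ne: "S \<noteq> {}"
    and uhf: "is_UHF X S k f" and bal: "balanced X S k b f"
    and \<omega>_meas: "\<And>x. x \<in> X \<Longrightarrow> \<omega> x \<in> borel_measurable \<mu>"
    and \<omega>_nonneg: "\<And>x z. x \<in> X \<Longrightarrow> z \<in> space \<mu> \<Longrightarrow> 0 \<le> \<omega> x z"
    and \<omega>_prob: "\<And>x. x \<in> X \<Longrightarrow> (\<integral>\<^sup>+ z. ennreal (\<omega> x z) \<partial>\<mu>) = 1"
    and \<epsilon>: "0 \<le> \<epsilon>" "\<epsilon> < 1"
  shows "ereal (prob_space.mutual_information (joint_MSXZ X S k f \<mu> \<omega>) 2
            (count_space UNIV) (\<mu> \<Otimes>\<^sub>M count_space UNIV)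
            (\<lambda>\<xi>. fst (fst \<xi>)) (\<lambda>\<xi>. (snd \<xi>, fst (snd (fst \<xi>)))))
         \<le> ereal (1 / ln 2) * pow2e (- (ereal (real b) - Imax_smooth \<epsilon> \<mu> X \<omega>))
           + ereal (\<epsilon> * real k)"
proof -
  interpret hashed_channel X S k b f \<mu> \<omega>
    by unfold_locales (fact assms)+
  have "(\<lambda>\<xi>. fst (fst \<xi>)) = msg" "(\<lambda>\<xi>. (snd \<xi>, fst (snd (fst \<xi>)))) = obs"
    by (simp_all add: fun_eq_iff msg_def obs_def)
  moreover have "ereal (prob_space.mutual_information joint 2 (count_space UNIV) obs_space msg obs)
      \<le> ereal (1 / ln 2 * 2 powr - real b) * pow2e (Imax_smooth \<epsilon> \<mu> X \<omega>) + ereal (\<epsilon> * real k)"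
    unfolding Imax_smooth_eq_INF
  proof (rule le_pow2e_INF_log2e)
    fix T assume "T \<in> {T. admissible \<epsilon> T}"
    then have "admissible \<epsilon> T" ..
    show "max_dens_integral T \<noteq> 0"
      using admissible_max_dens_integral_ge[OF \<open>admissible \<epsilon> T\<close>] \<epsilon> by auto
    show "prob_space.mutual_information joint 2 (count_space UNIV) obs_space msg obs
          \<le> 1 / ln 2 * 2 powr - real b * enn2real (max_dens_integral T) + \<epsilon> * k"
      if "max_dens_integral T \<noteq> \<infinity>"
      using mutual_information_le[OF \<open>admissible \<epsilon> T\<close> that \<epsilon>(1)] .
  qed simp
  ultimately show ?thesis
    by (simp add: pow2e_minus_diff mult.assoc[symmetric])
qed

end
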